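(* Let $\phi:\mathbb{R}^{n\times n}\to\mathbb{R}$ be differentiable and $L$-gradient Lipschitz, and let $M^\star=\arg\min\phi$ satisfy $M^\star\succeq0$. Let $f(X)=\phi(XX^T)$. Then for all $X,V\in\mathbb{R}^{n\times r}$ and $\eta\ge0$ with $\lambda_{\min}(X^TX)+\eta>0$, \[ f(X+V)\le f(X)+\langle\nabla f(X),V\rangle+\frac{\ell_{X,\eta}}2\|V\|_{X,\eta}^2, \] where \[ \ell_{X,\eta}=L\left[4+\frac{2\|XX^T-M^\star\|_F+4\|V\|_{X,\eta}}{\lambda_{\min}(X^TX)+\eta}+\left(\frac{\|V\|_{X,\eta}}{\lambda_{\min}(X^TX)+\eta}\right)^2\right]. \]
   Context: $\phi$ is $L$-gradient Lipschitz if $\|\nabla\phi(M+E)-\nabla\phi(M)\|_F\le L\|E\|_F$ for all $M,E$. The local norm is $\|V\|_{X,\eta}=\|V(X^TX+\eta I)^{1/2}\|_F$. $\langle A,B\rangle=\operatorname{tr}(A^TB)$. *)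

theory Defs
  imports "HOL-Analysis.Analysis"
begin

text \<open>Matrices in R^(m x k) are represented as real^'k^'m (rows indexed by 'm).
  On this type, norm is the Frobenius norm and the inner product is tr(A^T B).\<close>

definition gradient :: "('a::real_inner \<Rightarrow> real) \<Rightarrow> 'a \<Rightarrow> 'a" where
  "gradient f x = (THE g. (f has_derivative (\<lambda>v. g \<bullet> v)) (at x))"

definition psd :: "real^'n^'n \<Rightarrow> bool" where
  "psd A \<longleftrightarrow> transpose A = A \<and> (\<forall>x. 0 \<le> x \<bullet> (A *v x))"

definition lambda_min :: "real^'n^'n \<Rightarrow> real" where
  "lambda_min A = Min {l. \<exists>v. v \<noteq> 0 \<and> A *v v = l *\<^sub>R v}"

definition msqrt :: "real^'n^'n \<Rightarrow> real^'n^'n" where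
  "msqrt A = (THE S. psd S \<and> S ** S = A)"

definition local_norm :: "real^'r^'n \<Rightarrow> real \<Rightarrow> real^'r^'n \<Rightarrow> real" where
  "local_norm X eta V = norm (V ** msqrt (transpose X ** X + eta *\<^sub>R mat 1))"

end

theory Submission
  imports Defs
begin

text \<open>Write M = X X^T and E = X V^T + V X^T + V V^T, so that (X + V)(X + V)^T = M + E.
  The descent lemma for phi bounds f(X + V) by f(X) + <grad phi(M), X V^T + V X^T>
  + <grad phi(M), V V^T> + L/2 ||E||^2, and the first inner product is <grad f(X), V>.
  As grad phi vanishes at the minimiser Mstar, ||grad phi(M)|| \<le> L ||M - Mstar||.
  Summing over the rows v of V, the squared local norm nv^2 equals \<Sum> (||X v||^2 + eta ||v||^2);
  hence ||X V^T|| \<le> nv and, by the Rayleigh bound for the smallest eigenvalue,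
  (lambda_min(X^T X) + eta) ||V||^2 \<le> nv^2. With ||V V^T|| \<le> ||V||^2 this bounds the two remaining
  terms by L ||M - Mstar|| nv^2 / lam and L/2 (2 nv + nv^2 / lam)^2, which add up to ell/2 nv^2.
  The spectral theorem enters twice: for the Rayleigh bound, and for the existence and uniqueness of
  the positive semidefinite square root in the definition of the local norm.\<close>

section \<open>Spectral theorem for symmetric matrices\<close>

lemma symmetric_inner_matrix_vector:
  fixes A :: "real^'n^'n"
  assumes "transpose A = A"
  shows "x \<bullet> (A *v y) = (A *v x) \<bullet> y"
  by (metis assms dot_lmul_matrix transpose_matrix_vector)

lemma linear_coeff_eq_0_if_quadratic_nonneg:
  fixes a b :: real
  assumes nonneg: "\<And>t. 0 \<le> 2 * t * a + t\<^sup>2 * b"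
  shows "a = 0"
proof (rule ccontr)
  assume "a \<noteq> 0"
  define c where "c = \<bar>b\<bar> + 1"
  have c: "c > 0" "b \<le> c" unfolding c_def by auto
  define t where "t = - a / c"
  have "t\<^sup>2 * b \<le> t\<^sup>2 * c" using c by (intro mult_left_mono) auto
  also have "\<dots> = a\<^sup>2 / c" unfolding t_def using c by (simp add: power2_eq_square field_simps)
  finally have "0 \<le> 2 * t * a + a\<^sup>2 / c" using nonneg[of t] by linarith
  moreover have "2 * t * a = - 2 * (a\<^sup>2 / c)" unfolding t_def using c by (simp add: power2_eq_square field_simps)
  moreover have "a\<^sup>2 / c > 0" using \<open>a \<noteq> 0\<close> c by simp
  ultimately show False by linarith
qed

text \<open>A minimiser of the Rayleigh quotient over the unit sphere of W is an eigenvector: along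
  u + t w the quadratic form minus mu times the squared norm is nonnegative and vanishes at t = 0,
  so its linear coefficient w \<bullet> (A u - mu u) is zero.\<close>
lemma symmetric_invariant_subspace_eigenvector:
  fixes A :: "real^'n^'n"
  assumes sym: "transpose A = A" and sub: "subspace W" and inv: "\<forall>x\<in>W. A *v x \<in> W"
    and w: "w \<in> W" "w \<noteq> 0"
  obtains u where "u \<in> W" "norm u = 1" "A *v u = (u \<bullet> (A *v u)) *\<^sub>R u"
proof -
  define K where "K = W \<inter> sphere 0 1"
  have "w /\<^sub>R norm w \<in> K" using w sub unfolding K_def by (auto simp: subspace_scale)
  hence Kne: "K \<noteq> {}" by auto
  have Kc: "compact K" unfolding K_def
    using compact_Int_closed[OF compact_sphere closed_subspace[OF sub]] by (simp add: Int_commute)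
  have cont: "continuous_on K (\<lambda>x. x \<bullet> (A *v x))"
    by (intro continuous_intros linear_continuous_on
        matrix_vector_mul_linear[THEN linear_conv_bounded_linear[THEN iffD1]])
  obtain u where u: "u \<in> K" and umin: "\<And>y. y \<in> K \<Longrightarrow> u \<bullet> (A *v u) \<le> y \<bullet> (A *v y)"
    using continuous_attains_inf[OF Kc Kne cont] by blast
  define mu where "mu = u \<bullet> (A *v u)"
  have uW: "u \<in> W" and un: "norm u = 1" using u unfolding K_def by auto
  have uu: "u \<bullet> u = 1" using un by (simp add: norm_eq_1)
  have rayleigh: "mu * (x \<bullet> x) \<le> x \<bullet> (A *v x)" if "x \<in> W" for x
  proof (cases "x = 0")
    case False
    define y where "y = x /\<^sub>R norm x"
    have "y \<in> K" using that False sub unfolding K_def y_def by (auto simp: subspace_scale)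
    hence "mu \<le> y \<bullet> (A *v y)" using umin mu_def by auto
    also have "y \<bullet> (A *v y) = (x \<bullet> (A *v x)) / (norm x)\<^sup>2"
      unfolding y_def by (simp add: matrix_vector_mult_scaleR power2_eq_square field_simps)
    finally show ?thesis using False by (simp add: field_simps power2_norm_eq_inner)
  qed simp
  have orth: "w \<bullet> (A *v u - mu *\<^sub>R u) = 0" if wW: "w \<in> W" for w
  proof (rule linear_coeff_eq_0_if_quadratic_nonneg)
    fix t :: real
    have "u + t *\<^sub>R w \<in> W" using uW wW sub by (simp add: subspace_add subspace_scale)
    hence "mu * ((u + t *\<^sub>R w) \<bullet> (u + t *\<^sub>R w)) \<le> (u + t *\<^sub>R w) \<bullet> (A *v (u + t *\<^sub>R w))"
      by (rule rayleigh)
    moreover have "u \<bullet> (A *v w) = w \<bullet> (A *v u)"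
      using symmetric_inner_matrix_vector[OF sym, of u w] by (simp add: inner_commute)
    ultimately show "0 \<le> 2 * t * (w \<bullet> (A *v u - mu *\<^sub>R u)) + t\<^sup>2 * (w \<bullet> (A *v w) - mu * (w \<bullet> w))"
      by (simp add: algebra_simps inner_add_left inner_add_right matrix_vector_right_distrib
          matrix_vector_mult_scaleR power2_eq_square uu mu_def[symmetric] inner_commute[of w u])
  qed
  have "A *v u - mu *\<^sub>R u \<in> W" using inv uW sub by (simp add: subspace_diff subspace_scale)
  from orth[OF this] have "A *v u = mu *\<^sub>R u" by simp
  with uW un show thesis unfolding mu_def by (rule that)
qed

lemma symmetric_invariant_subspace_orthonormal_eigenvectors:
  fixes A :: "real^'n^'n"
  assumes sym: "transpose A = A"
  shows "subspace W \<Longrightarrow> \<forall>x\<in>W. A *v x \<in> W \<Longrightarrow>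
    \<exists>B. B \<subseteq> W \<and> finite B \<and> pairwise orthogonal B \<and>
      (\<forall>b\<in>B. norm b = 1 \<and> A *v b = (b \<bullet> (A *v b)) *\<^sub>R b) \<and> W \<subseteq> span B"
proof (induction "dim W" arbitrary: W rule: less_induct)
  case less
  note sub = less.prems(1) and inv = less.prems(2)
  show ?case
  proof (cases "W \<subseteq> {0}")
    case True
    then show ?thesis by (intro exI[of _ "{}"]) auto
  next
    case False
    then obtain w where "w \<in> W" "w \<noteq> 0" by auto
    then obtain u where uW: "u \<in> W" and un: "norm u = 1" and eig_u: "A *v u = (u \<bullet> (A *v u)) *\<^sub>R u"
      using symmetric_invariant_subspace_eigenvector[OF sym sub inv] by blast
    define mu where "mu = u \<bullet> (A *v u)"
    have eig: "A *v u = mu *\<^sub>R u" using eig_u unfolding mu_def .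
    have uu: "u \<bullet> u = 1" using un by (simp add: norm_eq_1)
    define W' where "W' = {x \<in> W. u \<bullet> x = 0}"
    have sub': "subspace W'" using sub unfolding W'_def subspace_def by (auto simp: inner_add_right)
    have inv': "\<forall>x\<in>W'. A *v x \<in> W'"
    proof
      fix x assume x: "x \<in> W'"
      have "u \<bullet> (A *v x) = (A *v u) \<bullet> x" by (rule symmetric_inner_matrix_vector[OF sym])
      also have "\<dots> = 0" using x eig unfolding W'_def by simp
      finally show "A *v x \<in> W'" using x inv unfolding W'_def by auto
    qed
    have "W' \<subset> W" using uW uu unfolding W'_def
      by (metis (mono_tags, lifting) mem_Collect_eq psubsetI subsetI zero_neq_one)
    hence "dim W' < dim W" by (metis dim_psubset span_eq_iff sub sub')
    from less.hyps[OF this sub' inv'] obtain B' where B':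
      "B' \<subseteq> W'" "finite B'" "pairwise orthogonal B'"
      "\<forall>b\<in>B'. norm b = 1 \<and> A *v b = (b \<bullet> (A *v b)) *\<^sub>R b" "W' \<subseteq> span B'" by blast
    show ?thesis
    proof (intro exI[of _ "insert u B'"] conjI)
      show "insert u B' \<subseteq> W" using B'(1) uW unfolding W'_def by auto
      show "pairwise orthogonal (insert u B')"
        using B'(3) B'(1) unfolding pairwise_insert W'_def orthogonal_def by (auto simp: inner_commute)
      show "W \<subseteq> span (insert u B')"
      proof
        fix x assume x: "x \<in> W"
        have "x - (u \<bullet> x) *\<^sub>R u \<in> W'" unfolding W'_def
          using x uW sub uu by (simp add: subspace_diff subspace_scale inner_diff_right)
        hence "x - (u \<bullet> x) *\<^sub>R u \<in> span (insert u B')" using B'(5)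
          by (meson in_mono span_mono subset_insertI)
        moreover have "(u \<bullet> x) *\<^sub>R u \<in> span (insert u B')" by (simp add: span_base span_scale)
        ultimately show "x \<in> span (insert u B')" by (metis diff_add_cancel span_add)
      qed
    qed (use B'(2,4) un eig_u in auto)
  qed
qed

definition orthonormal_eigenbasis :: "real^'n^'n \<Rightarrow> (real^'n) set \<Rightarrow> bool" where
  "orthonormal_eigenbasis A B \<longleftrightarrow> finite B \<and> (\<forall>b\<in>B. \<forall>c\<in>B. b \<bullet> c = (if b = c then 1 else 0)) \<and>
     (\<forall>b\<in>B. A *v b = (b \<bullet> (A *v b)) *\<^sub>R b) \<and> (\<forall>x. x = (\<Sum>b\<in>B. (x \<bullet> b) *\<^sub>R b))"

lemma symmetric_orthonormal_eigenbasis: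
  fixes A :: "real^'n^'n"
  assumes sym: "transpose A = A"
  obtains B where "orthonormal_eigenbasis A B"
proof -
  obtain B where B: "finite B" "pairwise orthogonal B"
      "\<forall>b\<in>B. norm b = 1 \<and> A *v b = (b \<bullet> (A *v b)) *\<^sub>R b" "UNIV \<subseteq> span B"
    using symmetric_invariant_subspace_orthonormal_eigenvectors[OF sym subspace_UNIV] by blast
  have "b \<bullet> c = (if b = c then 1 else 0)" if "b \<in> B" "c \<in> B" for b c
    using B(2,3) that unfolding pairwise_def orthogonal_def by (auto simp: norm_eq_1)
  moreover have "x = (\<Sum>b\<in>B. (x \<bullet> b) *\<^sub>R b)" for x
    using orthonormal_basis_expand[OF B(2) _ _ B(1), of x] B(3,4) by (metis UNIV_I in_mono)
  ultimately show thesis using B(1,3) by (intro that) (auto simp: orthonormal_eigenbasis_def)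
qed

context
  fixes A :: "real^'n^'n" and B :: "(real^'n) set"
  assumes basis: "orthonormal_eigenbasis A B"
begin

lemma orthonormal_eigenbasis_inner_eigenvector:
  assumes "b \<in> B"
  shows "x \<bullet> (A *v b) = (b \<bullet> (A *v b)) * (x \<bullet> b)"
proof -
  have "A *v b = (b \<bullet> (A *v b)) *\<^sub>R b" using basis assms unfolding orthonormal_eigenbasis_def by blast
  from arg_cong[OF this, of "\<lambda>y. x \<bullet> y"] show ?thesis by simp
qed

lemma orthonormal_eigenbasis_matrix_vector_expand:
  "(M::real^'n^'m) *v x = (\<Sum>b\<in>B. (x \<bullet> b) *\<^sub>R (M *v b))"
proof -
  have "x = (\<Sum>b\<in>B. (x \<bullet> b) *\<^sub>R b)" using basis unfolding orthonormal_eigenbasis_def by blast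
  hence "M *v x = M *v (\<Sum>b\<in>B. (x \<bullet> b) *\<^sub>R b)" by simp
  thus ?thesis by (simp add: linear_sum[OF matrix_vector_mul_linear] o_def matrix_vector_mult_scaleR)
qed

lemma orthonormal_eigenbasis_matrix_eqI:
  assumes "\<And>b. b \<in> B \<Longrightarrow> M *v b = N *v b"
  shows "M = N"
proof -
  have "M *v x = N *v x" for x
    using orthonormal_eigenbasis_matrix_vector_expand[of M x] orthonormal_eigenbasis_matrix_vector_expand[of N x]
      assms by (metis (no_types, lifting) sum.cong)
  thus ?thesis by (simp add: matrix_eq)
qed

lemma orthonormal_eigenbasis_quadratic_form:
  "x \<bullet> (A *v x) = (\<Sum>b\<in>B. (b \<bullet> (A *v b)) * (x \<bullet> b)\<^sup>2)"
proof -
  have "x \<bullet> (A *v x) = (\<Sum>b\<in>B. (x \<bullet> b) * (x \<bullet> (A *v b)))"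
    by (subst orthonormal_eigenbasis_matrix_vector_expand) (simp add: inner_sum_right)
  also have "\<dots> = (\<Sum>b\<in>B. (b \<bullet> (A *v b)) * (x \<bullet> b)\<^sup>2)"
    by (intro sum.cong refl) (simp add: orthonormal_eigenbasis_inner_eigenvector[of _ x] power2_eq_square)
  finally show ?thesis .
qed

lemma orthonormal_eigenbasis_inner_self: "x \<bullet> x = (\<Sum>b\<in>B. (x \<bullet> b)\<^sup>2)"
proof -
  have "x = (\<Sum>b\<in>B. (x \<bullet> b) *\<^sub>R b)" using basis unfolding orthonormal_eigenbasis_def by blast
  hence "x \<bullet> x = x \<bullet> (\<Sum>b\<in>B. (x \<bullet> b) *\<^sub>R b)" by simp
  thus ?thesis by (simp add: inner_sum_right power2_eq_square)
qed

lemma eigenvalues_eq_rayleigh_image: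
  assumes sym: "transpose A = A"
  shows "{l. \<exists>v. v \<noteq> 0 \<and> A *v v = l *\<^sub>R v} = (\<lambda>b. b \<bullet> (A *v b)) ` B"
proof (intro equalityI subsetI)
  fix l assume "l \<in> {l. \<exists>v. v \<noteq> 0 \<and> A *v v = l *\<^sub>R v}"
  then obtain v where v: "v \<noteq> 0" "A *v v = l *\<^sub>R v" by auto
  have "\<exists>b\<in>B. b \<bullet> v \<noteq> 0"
  proof (rule ccontr)
    assume "\<not> (\<exists>b\<in>B. b \<bullet> v \<noteq> 0)"
    hence "v \<bullet> v = 0" unfolding orthonormal_eigenbasis_inner_self[of v] by (simp add: inner_commute)
    with v(1) show False by simp
  qed
  then obtain b where b: "b \<in> B" "b \<bullet> v \<noteq> 0" ..
  have "l * (b \<bullet> v) = b \<bullet> (A *v v)" using v by simp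
  also have "\<dots> = v \<bullet> (A *v b)"
    using symmetric_inner_matrix_vector[OF sym, of b v] inner_commute by metis
  also have "\<dots> = (b \<bullet> (A *v b)) * (b \<bullet> v)"
    using orthonormal_eigenbasis_inner_eigenvector[OF b(1), of v] inner_commute by metis
  finally show "l \<in> (\<lambda>b. b \<bullet> (A *v b)) ` B" using b by auto
next
  fix l assume "l \<in> (\<lambda>b. b \<bullet> (A *v b)) ` B"
  then obtain b where "b \<in> B" "l = b \<bullet> (A *v b)" by blast
  moreover have "b \<noteq> 0" if "b \<in> B" for b
    using basis that unfolding orthonormal_eigenbasis_def by force
  ultimately show "l \<in> {l. \<exists>v. v \<noteq> 0 \<and> A *v v = l *\<^sub>R v}"
    using basis unfolding orthonormal_eigenbasis_def by blast
qed

end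

lemma lambda_min_le_rayleigh:
  fixes A :: "real^'n^'n"
  assumes sym: "transpose A = A"
  shows "lambda_min A * (x \<bullet> x) \<le> x \<bullet> (A *v x)"
proof -
  obtain B where basis: "orthonormal_eigenbasis A B" using symmetric_orthonormal_eigenbasis[OF sym] .
  have lambda_min_eq: "lambda_min A = Min ((\<lambda>b. b \<bullet> (A *v b)) ` B)"
    unfolding lambda_min_def eigenvalues_eq_rayleigh_image[OF basis sym] ..
  have "finite B" using basis unfolding orthonormal_eigenbasis_def by blast
  have "lambda_min A * (x \<bullet> x) = (\<Sum>b\<in>B. lambda_min A * (x \<bullet> b)\<^sup>2)"
    by (subst orthonormal_eigenbasis_inner_self[OF basis]) (rule sum_distrib_left)
  also have "\<dots> \<le> (\<Sum>b\<in>B. (b \<bullet> (A *v b)) * (x \<bullet> b)\<^sup>2)"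
    unfolding lambda_min_eq using \<open>finite B\<close> by (intro sum_mono mult_right_mono Min_le) auto
  also have "\<dots> = x \<bullet> (A *v x)" by (rule orthonormal_eigenbasis_quadratic_form[OF basis, symmetric])
  finally show ?thesis .
qed

section \<open>Square roots of positive semidefinite matrices\<close>

lemma matrix_vector_mult_outer_sum:
  fixes B :: "(real^'n) set"
  shows "(\<chi> i j. \<Sum>b\<in>B. c b * b$i * b$j) *v x = (\<Sum>b\<in>B. (c b * (b \<bullet> x)) *\<^sub>R b)"
proof -
  have "((\<chi> i j. \<Sum>b\<in>B. c b * b$i * b$j) *v x)$i = (\<Sum>j\<in>UNIV. \<Sum>b\<in>B. c b * b$i * b$j * x$j)" for i
    by (simp add: matrix_vector_mult_def sum_distrib_right)
  also have "\<dots> i = (\<Sum>b\<in>B. \<Sum>j\<in>UNIV. c b * b$i * b$j * x$j)" for i by (rule sum.swap)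
  also have "\<dots> i = (\<Sum>b\<in>B. (c b * (b \<bullet> x)) *\<^sub>R b)$i" for i
    by (simp add: inner_vec_def sum_distrib_left sum_component mult_ac)
  finally show ?thesis by (simp add: vec_eq_iff)
qed

lemma psd_sqrt_on_eigenvector:
  fixes S :: "real^'n^'n"
  assumes psd: "psd S" and sq: "S ** S = H" and eig: "H *v b = (c * c) *\<^sub>R b" and "c \<ge> 0"
  shows "S *v b = c *\<^sub>R b"
proof -
  have sym: "transpose S = S" and nonneg: "\<And>x. 0 \<le> x \<bullet> (S *v x)" using psd unfolding psd_def by auto
  have SS: "S *v (S *v x) = H *v x" for x using sq by (simp add: matrix_vector_mul_assoc)
  define w where "w = S *v b - c *\<^sub>R b"
  have Sw: "S *v w = - c *\<^sub>R w"
    unfolding w_def by (simp add: matrix_vector_mult_diff_distrib matrix_vector_mult_scaleR SS eig algebra_simps)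
  show ?thesis
  proof (cases "c = 0")
    case True
    have "(S *v b) \<bullet> (S *v b) = b \<bullet> (S *v (S *v b))" by (simp add: symmetric_inner_matrix_vector[OF sym])
    also have "\<dots> = 0" by (simp add: SS eig True)
    finally show ?thesis using True by simp
  next
    case False
    have "0 \<le> w \<bullet> (S *v w)" by (rule nonneg)
    also have "\<dots> = - c * (w \<bullet> w)" by (simp add: Sw)
    finally have "w \<bullet> w \<le> 0" using False \<open>c \<ge> 0\<close> by (simp add: mult_le_0_iff)
    hence "w = 0" by (metis inner_eq_zero_iff inner_ge_zero order_antisym)
    thus ?thesis unfolding w_def by simp
  qed
qed

lemma orthonormal_eigenbasis_psd_sqrt:
  fixes H :: "real^'n^'n"
  assumes basis: "orthonormal_eigenbasis H B" and nonneg: "\<forall>b\<in>B. 0 \<le> b \<bullet> (H *v b)"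
  obtains S where "psd S" "S ** S = H"
proof
  define c where "c b = sqrt (b \<bullet> (H *v b))" for b
  define S :: "real^'n^'n" where "S = (\<chi> i j. \<Sum>b\<in>B. c b * b$i * b$j)"
  have fin: "finite B" and orth: "\<forall>b\<in>B. \<forall>b'\<in>B. b \<bullet> b' = (if b = b' then 1 else 0)"
    and eig: "\<forall>b\<in>B. H *v b = (b \<bullet> (H *v b)) *\<^sub>R b"
    using basis unfolding orthonormal_eigenbasis_def by blast+
  have Sb: "S *v b' = c b' *\<^sub>R b'" if "b' \<in> B" for b'
  proof -
    have "S *v b' = (\<Sum>b\<in>B. if b = b' then c b' *\<^sub>R b' else 0)"
      unfolding S_def matrix_vector_mult_outer_sum using orth that by (intro sum.cong) auto
    also have "\<dots> = c b' *\<^sub>R b'" using fin that by (simp add: sum.delta)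
    finally show ?thesis .
  qed
  show "psd S" unfolding psd_def
  proof (intro conjI allI)
    show "transpose S = S" unfolding S_def by (simp add: transpose_def vec_eq_iff mult_ac)
    fix x
    have "x \<bullet> (S *v x) = (\<Sum>b\<in>B. c b * (b \<bullet> x)\<^sup>2)"
      unfolding S_def matrix_vector_mult_outer_sum
      by (simp add: inner_sum_right power2_eq_square mult_ac inner_commute)
    also have "\<dots> \<ge> 0" unfolding c_def using nonneg by (intro sum_nonneg) auto
    finally show "0 \<le> x \<bullet> (S *v x)" .
  qed
  show "S ** S = H"
  proof (rule orthonormal_eigenbasis_matrix_eqI[OF basis])
    fix b assume b: "b \<in> B"
    have "(S ** S) *v b = (c b * c b) *\<^sub>R b"
      using b by (simp add: matrix_vector_mul_assoc[symmetric] Sb matrix_vector_mult_scaleR)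
    also have "\<dots> = H *v b" using eig nonneg b unfolding c_def by simp
    finally show "(S ** S) *v b = H *v b" .
  qed
qed

lemma psd_msqrt:
  fixes H :: "real^'n^'n"
  assumes psd: "psd H"
  shows "psd (msqrt H)" and "msqrt H ** msqrt H = H"
proof -
  have sym: "transpose H = H" and nonneg: "\<And>x. 0 \<le> x \<bullet> (H *v x)" using psd unfolding psd_def by auto
  obtain B where basis: "orthonormal_eigenbasis H B" using symmetric_orthonormal_eigenbasis[OF sym] .
  obtain S where S: "psd S" "S ** S = H" using orthonormal_eigenbasis_psd_sqrt[OF basis] nonneg by blast
  txt \<open>msqrt is a definite description, so uniqueness of the square root is needed as well.\<close>
  have "T = S" if T: "psd T" "T ** T = H" for T
  proof (rule orthonormal_eigenbasis_matrix_eqI[OF basis])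
    fix b assume b: "b \<in> B"
    hence eig: "H *v b = (sqrt (b \<bullet> (H *v b)) * sqrt (b \<bullet> (H *v b))) *\<^sub>R b"
      using basis nonneg unfolding orthonormal_eigenbasis_def by simp
    show "T *v b = S *v b"
      using psd_sqrt_on_eigenvector[OF T eig] psd_sqrt_on_eigenvector[OF S eig] nonneg[of b] by simp
  qed
  hence "msqrt H = S" unfolding msqrt_def using S by blast
  thus "psd (msqrt H)" "msqrt H ** msqrt H = H" using S by simp_all
qed

section \<open>Frobenius norm and local norm\<close>

lemma matrix_matrix_mult_row: "(A ** B) $ i = transpose B *v A $ i"
  for A :: "real^'k^'m" and B :: "real^'l^'k"
  by (simp add: matrix_matrix_mult_def vector_matrix_mult_def vec_eq_iff mult.commute)

lemma norm_matrix_power2_rows: "(norm A)\<^sup>2 = (\<Sum>i\<in>UNIV. (norm (A $ i))\<^sup>2)"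
  for A :: "real^'k^'m"
  by (simp add: power2_norm_eq_inner inner_vec_def)

lemma norm_transpose: "norm (transpose A) = norm A"
  for A :: "real^'k^'m"
proof -
  have "(norm (transpose A))\<^sup>2 = (\<Sum>i\<in>UNIV. \<Sum>j\<in>UNIV. A$j$i * A$j$i)"
    unfolding norm_matrix_power2_rows power2_norm_eq_inner inner_vec_def by (simp add: transpose_def)
  also have "\<dots> = (\<Sum>j\<in>UNIV. \<Sum>i\<in>UNIV. A$j$i * A$j$i)" by (rule sum.swap)
  also have "\<dots> = (norm A)\<^sup>2"
    unfolding norm_matrix_power2_rows power2_norm_eq_inner inner_vec_def by simp
  finally show ?thesis by (simp add: power2_eq_iff_nonneg)
qed

lemma norm_mult_transpose_self_le: "norm (V ** transpose V) \<le> (norm V)\<^sup>2"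
  for V :: "real^'k^'m"
proof -
  have "(norm (V ** transpose V))\<^sup>2 = (\<Sum>i\<in>UNIV. \<Sum>j\<in>UNIV. (V$i \<bullet> V$j)\<^sup>2)"
    unfolding norm_matrix_power2_rows power2_norm_eq_inner inner_vec_def[of "(V ** transpose V) $ _"]
    by (simp add: matrix_matrix_mult_def transpose_def inner_vec_def power2_eq_square)
  also have "\<dots> \<le> (\<Sum>i\<in>UNIV. \<Sum>j\<in>UNIV. (norm (V$i))\<^sup>2 * (norm (V$j))\<^sup>2)"
  proof (intro sum_mono)
    fix i j
    have "\<bar>V$i \<bullet> V$j\<bar> \<le> norm (V$i) * norm (V$j)" by (rule Cauchy_Schwarz_ineq2)
    from power_mono[OF this abs_ge_zero, of 2]
    show "(V$i \<bullet> V$j)\<^sup>2 \<le> (norm (V$i))\<^sup>2 * (norm (V$j))\<^sup>2" by (simp add: power_mult_distrib)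
  qed
  also have "\<dots> = ((norm V)\<^sup>2)\<^sup>2"
    unfolding norm_matrix_power2_rows power2_eq_square[of "sum _ _"] sum_product ..
  finally show ?thesis by (simp add: power2_le_imp_le)
qed

lemma inner_gram_matrix_vector: "x \<bullet> ((transpose X ** X) *v x) = (norm (X *v x))\<^sup>2"
  for X :: "real^'k^'m"
  by (simp add: matrix_vector_mul_assoc[symmetric] dot_lmul_matrix[symmetric] power2_norm_eq_inner
      inner_commute[of x])

lemma gram_plus_scaled_identity_matrix_vector:
  "(transpose X ** X + eta *\<^sub>R mat 1) *v x = (transpose X ** X) *v x + eta *\<^sub>R x"
  for X :: "real^'k^'m"
  by (simp add: matrix_vector_mult_add_rdistrib scaleR_matrix_vector_assoc[symmetric])

lemma psd_gram_plus_scaled_identity: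
  fixes X :: "real^'k^'m"
  assumes "eta \<ge> 0"
  shows "psd (transpose X ** X + eta *\<^sub>R mat 1)"
proof -
  have "transpose (transpose X ** X + eta *\<^sub>R mat 1) = transpose X ** X + eta *\<^sub>R mat 1"
    by (simp add: transpose_def matrix_matrix_mult_def mat_def vec_eq_iff mult.commute)
  thus ?thesis unfolding psd_def gram_plus_scaled_identity_matrix_vector
    using assms by (simp add: inner_add_right inner_gram_matrix_vector)
qed

lemma local_norm_power2:
  fixes X V :: "real^'r^'n"
  assumes "eta \<ge> 0"
  shows "(local_norm X eta V)\<^sup>2 = (\<Sum>i\<in>UNIV. (norm (X *v V$i))\<^sup>2 + eta * (norm (V$i))\<^sup>2)"
proof -
  define H where "H = transpose X ** X + eta *\<^sub>R mat 1"
  define S where "S = msqrt H"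
  have psd: "psd H" unfolding H_def using assms by (rule psd_gram_plus_scaled_identity)
  have sym: "transpose S = S" using psd_msqrt(1)[OF psd] unfolding S_def psd_def by simp
  have square: "S ** S = H" unfolding S_def by (rule psd_msqrt(2)[OF psd])
  have "(norm ((V ** S) $ i))\<^sup>2 = (norm (X *v V$i))\<^sup>2 + eta * (norm (V$i))\<^sup>2" for i
  proof -
    have "(norm ((V ** S) $ i))\<^sup>2 = (S *v V$i) \<bullet> (S *v V$i)"
      by (simp add: matrix_matrix_mult_row sym power2_norm_eq_inner)
    also have "\<dots> = V$i \<bullet> ((S ** S) *v V$i)"
      by (simp add: symmetric_inner_matrix_vector[OF sym] matrix_vector_mul_assoc inner_commute)
    also have "\<dots> = (norm (X *v V$i))\<^sup>2 + eta * (norm (V$i))\<^sup>2"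
      unfolding square H_def gram_plus_scaled_identity_matrix_vector
      by (simp add: inner_add_right inner_gram_matrix_vector power2_norm_eq_inner)
    finally show ?thesis .
  qed
  thus ?thesis unfolding local_norm_def H_def[symmetric] S_def[symmetric] norm_matrix_power2_rows by simp
qed

lemma norm_mult_transpose_le_local_norm:
  fixes X V :: "real^'r^'n"
  assumes "eta \<ge> 0"
  shows "norm (X ** transpose V) \<le> local_norm X eta V"
proof -
  have "norm (X ** transpose V) = norm (V ** transpose X)"
    using norm_transpose[of "V ** transpose X"] by (simp add: matrix_transpose_mul)
  hence "(norm (X ** transpose V))\<^sup>2 = (\<Sum>i\<in>UNIV. (norm (X *v V$i))\<^sup>2)"
    by (simp add: norm_matrix_power2_rows matrix_matrix_mult_row)
  also have "\<dots> \<le> (local_norm X eta V)\<^sup>2"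
    unfolding local_norm_power2[OF assms] using assms by (intro sum_mono) simp
  finally show ?thesis by (rule power2_le_imp_le) (simp add: local_norm_def)
qed

lemma lambda_min_mult_norm_le_local_norm:
  fixes X V :: "real^'r^'n"
  assumes "eta \<ge> 0"
  shows "(lambda_min (transpose X ** X) + eta) * (norm V)\<^sup>2 \<le> (local_norm X eta V)\<^sup>2"
proof -
  have "lambda_min (transpose X ** X) * (norm x)\<^sup>2 \<le> (norm (X *v x))\<^sup>2" for x :: "real^'r"
    using lambda_min_le_rayleigh[of "transpose X ** X" x]
    by (simp add: matrix_transpose_mul inner_gram_matrix_vector power2_norm_eq_inner)
  thus ?thesis
    unfolding local_norm_power2[OF assms] norm_matrix_power2_rows sum_distrib_left
    by (intro sum_mono) (simp add: algebra_simps)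
qed

section \<open>Gradients\<close>

lemma gradient_eqI:
  assumes "(f has_derivative (\<lambda>v. g \<bullet> v)) (at x)"
  shows "gradient f x = g"
  unfolding gradient_def
proof (rule the_equality)
  fix g' assume "(f has_derivative (\<lambda>v. g' \<bullet> v)) (at x)"
  hence "(\<lambda>v. g' \<bullet> v) = (\<lambda>v. g \<bullet> v)" using assms has_derivative_unique by blast
  thus "g' = g" by (metis vector_eq_rdot)
qed (rule assms)

lemma gradient_inner_eq:
  fixes f :: "'a::euclidean_space \<Rightarrow> real"
  assumes deriv: "(f has_derivative D) (at x)"
  shows "gradient f x \<bullet> v = D v"
proof -
  have lin: "linear D" using deriv by (rule has_derivative_linear)
  define g where "g = (\<Sum>b\<in>Basis. D b *\<^sub>R b)"
  have "g \<bullet> v = D v" for v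
  proof -
    have "g \<bullet> v = D (\<Sum>b\<in>Basis. (v \<bullet> b) *\<^sub>R b)"
      unfolding g_def inner_sum_left
      by (simp add: linear_sum[OF lin] linear_scale[OF lin] inner_commute mult.commute)
    also have "\<dots> = D v" by (simp add: euclidean_representation)
    finally show ?thesis .
  qed
  moreover from this have "gradient f x = g"
    using deriv by (intro gradient_eqI) (simp add: fun_eq_iff[symmetric])
  ultimately show ?thesis by simp
qed

lemma has_derivative_gradient:
  fixes f :: "'a::euclidean_space \<Rightarrow> real"
  assumes "f differentiable (at x)"
  shows "(f has_derivative (\<lambda>v. gradient f x \<bullet> v)) (at x)"
proof -
  obtain D where D: "(f has_derivative D) (at x)" using assms unfolding differentiable_def by blast
  moreover have "(\<lambda>v. gradient f x \<bullet> v) = D" using gradient_inner_eq[OF D] by (simp add: fun_eq_iff)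
  ultimately show ?thesis by simp
qed

lemma gradient_eq_0_at_minimum:
  fixes f :: "'a::euclidean_space \<Rightarrow> real"
  assumes "f differentiable (at m)" and "\<forall>x. f m \<le> f x"
  shows "gradient f m = 0"
proof -
  have "(\<lambda>v. gradient f m \<bullet> v) = (\<lambda>v. 0)"
    using has_derivative_local_min[OF has_derivative_gradient[OF assms(1)]] assms(2) by auto
  from fun_cong[OF this, of "gradient f m"] show ?thesis by simp
qed

lemma lipschitz_constant_nonneg:
  fixes g :: "'a::euclidean_space \<Rightarrow> 'b::real_normed_vector"
  assumes "\<forall>x h. norm (g (x + h) - g x) \<le> L * norm h"
  shows "L \<ge> 0"
proof -
  obtain b :: 'a where "b \<in> Basis" using nonempty_Basis by blast
  hence "norm b = 1" by simp
  moreover have "0 \<le> L * norm b" using assms by (meson norm_ge_zero order_trans)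
  ultimately show ?thesis by simp
qed

lemma gradient_lipschitz_descent:
  fixes f :: "'a::euclidean_space \<Rightarrow> real"
  assumes diff: "\<forall>x. f differentiable (at x)"
    and lip: "\<forall>x h. norm (gradient f (x + h) - gradient f x) \<le> L * norm h"
  shows "f (x + h) \<le> f x + gradient f x \<bullet> h + L / 2 * (norm h)\<^sup>2"
proof -
  define G where "G = gradient f x"
  define g where "g t = f (x + t *\<^sub>R h) - t * (G \<bullet> h) - L / 2 * t\<^sup>2 * (norm h)\<^sup>2" for t
  define g' where "g' t = (gradient f (x + t *\<^sub>R h) - G) \<bullet> h - L * t * (norm h)\<^sup>2" for t
  have "(g has_derivative (\<lambda>s. s * g' t)) (at t within {0..1})" for t
  proof -
    have "((\<lambda>t. f (x + t *\<^sub>R h)) has_derivative (\<lambda>s. gradient f (x + t *\<^sub>R h) \<bullet> (s *\<^sub>R h))) (at t within {0..1})"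
      by (rule has_derivative_compose[OF _ has_derivative_gradient[OF diff[rule_format]]])
        (auto intro!: derivative_eq_intros)
    thus ?thesis unfolding g_def g'_def
      by (auto intro!: derivative_eq_intros simp: algebra_simps inner_diff_left power2_eq_square)
  qed
  then obtain t where t: "t \<in> {0<..<1}" "g 1 - g 0 = 1 * g' t"
    using mvt_simple[of 0 1 g "\<lambda>t s. s * g' t"] by auto
  have "(gradient f (x + t *\<^sub>R h) - G) \<bullet> h \<le> norm (gradient f (x + t *\<^sub>R h) - G) * norm h"
    by (rule norm_cauchy_schwarz)
  also have "\<dots> \<le> (L * norm (t *\<^sub>R h)) * norm h"
    unfolding G_def by (intro mult_right_mono lip[rule_format]) auto
  also have "\<dots> = L * t * (norm h)\<^sup>2" using t by (simp add: power2_eq_square)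
  finally have "g' t \<le> 0" unfolding g'_def by simp
  hence "g 1 \<le> g 0" using t by simp
  thus ?thesis unfolding g_def G_def by simp
qed

lemma bounded_bilinear_matrix_matrix_mult:
  "bounded_bilinear (\<lambda>(A::real^'k^'m) (B::real^'l^'k). A ** B)"
proof -
  have "linear (\<lambda>B::real^'l^'k. A ** B)" for A :: "real^'k^'m"
    by (rule linearI) (simp_all add: matrix_add_ldistrib matrix_scalar_ac scalar_matrix_assoc)
  moreover have "linear (\<lambda>A::real^'k^'m. A ** B)" for B :: "real^'l^'k"
    by (rule linearI) (simp_all add: scalar_matrix_assoc[symmetric] matrix_matrix_mult_def vec_eq_iff
        sum.distrib distrib_right sum_distrib_left mult.assoc)
  ultimately show ?thesis by (simp add: bilinear_def bilinear_conv_bounded_bilinear[symmetric])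
qed

lemma has_derivative_mult_transpose_self:
  "((\<lambda>Y. Y ** transpose Y) has_derivative (\<lambda>H. Y ** transpose H + H ** transpose Y)) (at Y)"
  for Y :: "real^'k^'m"
proof -
  have "linear (transpose :: real^'k^'m \<Rightarrow> real^'m^'k)"
    by (rule linearI) (simp_all add: transpose_def vec_eq_iff)
  hence "(transpose has_derivative transpose) (at Y)"
    by (simp add: linear_conv_bounded_linear bounded_linear_imp_has_derivative)
  from bounded_bilinear.FDERIV[OF bounded_bilinear_matrix_matrix_mult has_derivative_id this]
  show ?thesis by simp
qed

lemma gradient_comp_mult_transpose_self_inner:
  fixes phi :: "real^'m^'m \<Rightarrow> real" and X V :: "real^'k^'m"
  assumes "phi differentiable (at (X ** transpose X))"
  shows "gradient (\<lambda>Y. phi (Y ** transpose Y)) X \<bullet> V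
    = gradient phi (X ** transpose X) \<bullet> (X ** transpose V + V ** transpose X)"
  by (rule gradient_inner_eq[OF has_derivative_compose[OF has_derivative_mult_transpose_self
        has_derivative_gradient[OF assms]]])

section \<open>The descent inequality for phi(X X^T)\<close>

lemma gradient_lipschitz_descent_mult_transpose_self:
  fixes phi :: "real^'n^'n \<Rightarrow> real" and Mstar :: "real^'n^'n" and X V :: "real^'r^'n"
  assumes diff: "\<forall>M. phi differentiable (at M)"
    and lip: "\<forall>M E. norm (gradient phi (M + E) - gradient phi M) \<le> L * norm E"
    and argmin: "\<forall>M. phi Mstar \<le> phi M"
  shows "phi ((X + V) ** transpose (X + V)) \<le> phi (X ** transpose X)
      + gradient (\<lambda>Y. phi (Y ** transpose Y)) X \<bullet> V
      + L * norm (X ** transpose X - Mstar) * norm (V ** transpose V)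
      + L / 2 * (2 * norm (X ** transpose V) + norm (V ** transpose V))\<^sup>2"
proof -
  define M where "M = X ** transpose X"
  define G where "G = gradient phi M"
  define E1 where "E1 = X ** transpose V + V ** transpose X"
  define E2 where "E2 = V ** transpose V"
  have L: "L \<ge> 0" using lip by (rule lipschitz_constant_nonneg)
  have "(X + V) ** transpose (X + V) = M + (E1 + E2)"
    unfolding M_def E1_def E2_def
    by (simp add: matrix_matrix_mult_def transpose_def vec_eq_iff sum.distrib algebra_simps)
  hence "phi ((X + V) ** transpose (X + V)) \<le> phi M + G \<bullet> E1 + G \<bullet> E2 + L / 2 * (norm (E1 + E2))\<^sup>2"
    unfolding G_def using gradient_lipschitz_descent[OF diff lip, of M "E1 + E2"]
    by (simp add: inner_add_right)
  moreover have "G \<bullet> E1 = gradient (\<lambda>Y. phi (Y ** transpose Y)) X \<bullet> V"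
    unfolding G_def M_def E1_def using diff by (simp add: gradient_comp_mult_transpose_self_inner)
  moreover have "G \<bullet> E2 \<le> L * norm (M - Mstar) * norm E2"
  proof -
    have "gradient phi Mstar = 0" using diff argmin by (simp add: gradient_eq_0_at_minimum)
    hence "norm G \<le> L * norm (M - Mstar)"
      using lip[rule_format, of Mstar "M - Mstar"] unfolding G_def by simp
    thus ?thesis using norm_cauchy_schwarz[of G E2] by (simp add: mult_right_mono order_trans)
  qed
  moreover have "norm (E1 + E2) \<le> 2 * norm (X ** transpose V) + norm E2"
  proof -
    have "norm (V ** transpose X) = norm (X ** transpose V)"
      using norm_transpose[of "X ** transpose V"] by (simp add: matrix_transpose_mul)
    thus ?thesis
      using norm_triangle_ineq[of "X ** transpose V" "V ** transpose X"] norm_triangle_ineq[of E1 E2]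
      unfolding E1_def by linarith
  qed
  hence "L / 2 * (norm (E1 + E2))\<^sup>2 \<le> L / 2 * (2 * norm (X ** transpose V) + norm E2)\<^sup>2"
    using L by (intro mult_left_mono power_mono) auto
  ultimately show ?thesis unfolding M_def E2_def by linarith
qed

theorem lemma22:
  fixes phi :: "real^'n^'n \<Rightarrow> real" and L eta :: real
    and Mstar :: "real^'n^'n" and X V :: "real^'r^'n"
  assumes diff: "\<forall>M. phi differentiable (at M)"
    and lip: "\<forall>M E. norm (gradient phi (M + E) - gradient phi M) \<le> L * norm E"
    and argmin: "\<forall>M. phi Mstar \<le> phi M"
    and psd_star: "psd Mstar"
    and eta: "eta \<ge> 0"
    and pos: "lambda_min (transpose X ** X) + eta > 0"
  shows "let f = (\<lambda>Y::real^'r^'n. phi (Y ** transpose Y));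
             lam = lambda_min (transpose X ** X) + eta;
             nv = local_norm X eta V;
             ell = L * (4 + (2 * norm (X ** transpose X - Mstar) + 4 * nv) / lam + (nv / lam)\<^sup>2)
         in f (X + V) \<le> f X + gradient f X \<bullet> V + ell / 2 * nv\<^sup>2"
proof -
  define lam where "lam = lambda_min (transpose X ** X) + eta"
  define nv where "nv = local_norm X eta V"
  define D where "D = norm (X ** transpose X - Mstar)"
  define q where "q = norm (V ** transpose V)"
  have L: "L \<ge> 0" using lip by (rule lipschitz_constant_nonneg)
  have lam: "lam > 0" using pos unfolding lam_def .
  have "lam * q \<le> lam * (norm V)\<^sup>2"
    using lam norm_mult_transpose_self_le[of V] unfolding q_def by simp
  also have "\<dots> \<le> nv\<^sup>2"
    unfolding lam_def nv_def by (rule lambda_min_mult_norm_le_local_norm[OF eta])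
  finally have q: "q \<le> nv\<^sup>2 / lam" using lam by (simp add: pos_le_divide_eq mult.commute)
  have "L * D * q + L / 2 * (2 * norm (X ** transpose V) + q)\<^sup>2
      \<le> L * D * (nv\<^sup>2 / lam) + L / 2 * (2 * nv + nv\<^sup>2 / lam)\<^sup>2"
    using q L norm_mult_transpose_le_local_norm[OF eta, of X V]
    by (intro add_mono mult_left_mono power_mono) (auto simp: D_def q_def nv_def)
  also have "\<dots> = L * (4 + (2 * D + 4 * nv) / lam + (nv / lam)\<^sup>2) / 2 * nv\<^sup>2"
    using lam by (simp add: field_simps power2_eq_square)
  finally show ?thesis
    using gradient_lipschitz_descent_mult_transpose_self[OF diff lip argmin, of X V]
    unfolding Let_def lam_def[symmetric] nv_def[symmetric] D_def[symmetric] q_def[symmetric] by linarith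
qed

end
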